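(* Let $X$ be a complex Banach space, let $\mathcal{F}$ be an algebra with unit $\mathbf{1}$, and let $\Phi:\mathcal{F}\to\mathcal{C}(X)$ be a proto-calculus. Then for all $f,g\in\mathcal{F}$ and $\lambda\in\mathbb{C}$: (a) If $\lambda\neq 0$ or $\Phi(f)\in\mathcal{L}(X)$, then $\Phi(\lambda f)=\lambda\Phi(f)$. (b) If $\Phi(g)\in\mathcal{L}(X)$, then $\Phi(f)+\Phi(g)=\Phi(f+g)$ and $\Phi(f)\Phi(g)=\Phi(fg)$. (c) If $fg=\mathbf{1}$, then $\Phi(g)$ is injective and $\Phi(g)^{-1}\subseteq\Phi(f)$. If in addition $fg=gf$, then $\Phi(g)^{-1}=\Phi(f)$. (d) The set $\mathrm{bdd}(\mathcal{F},\Phi)=\{f\in\mathcal{F}: \Phi(f)\in\mathcal{L}(X)\}$ is a unital subalgebra of $\mathcal{F}$, and $\Phi:\mathrm{bdd}(\mathcal{F},\Phi)\to\mathcal{L}(X)$ is an algebra homomorphism.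
   Context: $\mathcal{L}(X)$ denotes the bounded linear operators and $\mathcal{C}(X)$ the closed (possibly unbounded) linear operators on $X$. For operators, $S\subseteq T$ means inclusion of graphs; $S+T$ has domain $\mathrm{dom}(S)\cap\mathrm{dom}(T)$, $ST$ has domain $\{x\in\mathrm{dom}(T): Tx\in\mathrm{dom}(S)\}$, and $\lambda T$ has domain $\mathrm{dom}(T)$. The algebra $\mathcal{F}$ need not be commutative. A map $\Phi:\mathcal{F}\to\mathcal{C}(X)$ is a proto-calculus if for all $f,g\in\mathcal{F}$, $\lambda\in\mathbb{C}$: (FC1) $\Phi(\mathbf{1})=I$; (FC2) $\lambda\Phi(f)\subseteq\Phi(\lambda f)$ and $\Phi(f)+\Phi(g)\subseteq\Phi(f+g)$; (FC3) $\Phi(f)\Phi(g)\subseteq\Phi(fg)$ and $\mathrm{dom}(\Phi(f)\Phi(g))=\mathrm{dom}(\Phi(g))\cap\mathrm{dom}(\Phi(fg))$. *)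

theory Defs
  imports "HOL-Analysis.Analysis"
begin

class complex_vector = ab_group_add +
  fixes scaleC :: "complex \<Rightarrow> 'a \<Rightarrow> 'a" (infixr "*\<^sub>C" 75)
  assumes scaleC_add_right: "a *\<^sub>C (x + y) = a *\<^sub>C x + a *\<^sub>C y"
    and scaleC_add_left: "(a + b) *\<^sub>C x = a *\<^sub>C x + b *\<^sub>C x"
    and scaleC_scaleC: "a *\<^sub>C (b *\<^sub>C x) = (a * b) *\<^sub>C x"
    and scaleC_one: "1 *\<^sub>C x = x"

class complex_algebra_1 = complex_vector + ring_1 +
  assumes mult_scaleC_left: "(a *\<^sub>C x) * y = a *\<^sub>C (x * y)"
    and mult_scaleC_right: "x * (a *\<^sub>C y) = a *\<^sub>C (x * y)"

class complex_normed_vector = complex_vector + real_normed_vector +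
  assumes scaleR_scaleC: "scaleR r x = complex_of_real r *\<^sub>C x"
    and norm_scaleC: "norm (a *\<^sub>C x) = cmod a * norm x"

text \<open>An operator on X is identified with its graph, a subset of X \<times> X.
  Domain G is its domain; inclusion of operators is inclusion of graphs.\<close>

definition linear_op :: "('x::complex_vector \<times> 'x) set \<Rightarrow> bool" where
  "linear_op G \<longleftrightarrow> (0, 0) \<in> G
     \<and> (\<forall>x y u v. (x, y) \<in> G \<longrightarrow> (u, v) \<in> G \<longrightarrow> (x + u, y + v) \<in> G)
     \<and> (\<forall>c x y. (x, y) \<in> G \<longrightarrow> (c *\<^sub>C x, c *\<^sub>C y) \<in> G)
     \<and> (\<forall>y. (0, y) \<in> G \<longrightarrow> y = 0)"

definition closed_ops :: "('x::{complex_normed_vector,banach} \<times> 'x) set set" where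
  "closed_ops = {G. linear_op G \<and> closed G}"

definition bounded_ops :: "('x::{complex_normed_vector,banach} \<times> 'x) set set" where
  "bounded_ops = {G. linear_op G \<and> Domain G = UNIV \<and> (\<exists>C. \<forall>x y. (x, y) \<in> G \<longrightarrow> norm y \<le> C * norm x)}"

definition op_add :: "('x::complex_vector \<times> 'x) set \<Rightarrow> ('x \<times> 'x) set \<Rightarrow> ('x \<times> 'x) set" where
  "op_add S T = {(x, y + z) | x y z. (x, y) \<in> S \<and> (x, z) \<in> T}"

text \<open>op_mult S T is the product S T (first T, then S).\<close>
definition op_mult :: "('x \<times> 'x) set \<Rightarrow> ('x \<times> 'x) set \<Rightarrow> ('x \<times> 'x) set" where
  "op_mult S T = {(x, z) | x y z. (x, y) \<in> T \<and> (y, z) \<in> S}"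

definition op_scale :: "complex \<Rightarrow> ('x::complex_vector \<times> 'x) set \<Rightarrow> ('x \<times> 'x) set" where
  "op_scale c T = {(x, c *\<^sub>C y) | x y. (x, y) \<in> T}"

definition injective_op :: "('x \<times> 'x) set \<Rightarrow> bool" where
  "injective_op G \<longleftrightarrow> (\<forall>x1 x2 y. (x1, y) \<in> G \<longrightarrow> (x2, y) \<in> G \<longrightarrow> x1 = x2)"

definition op_inv :: "('x \<times> 'x) set \<Rightarrow> ('x \<times> 'x) set" where
  "op_inv G = converse G"

definition proto_calculus ::
  "('f::complex_algebra_1 \<Rightarrow> ('x::{complex_normed_vector,banach} \<times> 'x) set) \<Rightarrow> bool" where
  "proto_calculus \<Phi> \<longleftrightarrow>
     (\<forall>f. \<Phi> f \<in> closed_ops)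
   \<and> \<Phi> 1 = Id
   \<and> (\<forall>f c. op_scale c (\<Phi> f) \<subseteq> \<Phi> (c *\<^sub>C f))
   \<and> (\<forall>f g. op_add (\<Phi> f) (\<Phi> g) \<subseteq> \<Phi> (f + g))
   \<and> (\<forall>f g. op_mult (\<Phi> f) (\<Phi> g) \<subseteq> \<Phi> (f * g)
           \<and> Domain (op_mult (\<Phi> f) (\<Phi> g)) = Domain (\<Phi> g) \<inter> Domain (\<Phi> (f * g)))"

definition bdd_set ::
  "('f::complex_algebra_1 \<Rightarrow> ('x::{complex_normed_vector,banach} \<times> 'x) set) \<Rightarrow> 'f set" where
  "bdd_set \<Phi> = {f. \<Phi> f \<in> bounded_ops}"

definition unital_subalgebra :: "'f::complex_algebra_1 set \<Rightarrow> bool" where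
  "unital_subalgebra B \<longleftrightarrow> 1 \<in> B
     \<and> (\<forall>f\<in>B. \<forall>g\<in>B. f + g \<in> B \<and> f * g \<in> B)
     \<and> (\<forall>c. \<forall>f\<in>B. c *\<^sub>C f \<in> B)"

definition alg_hom_into_bounded ::
  "'f::complex_algebra_1 set \<Rightarrow> ('f \<Rightarrow> ('x::{complex_normed_vector,banach} \<times> 'x) set) \<Rightarrow> bool" where
  "alg_hom_into_bounded B \<Phi> \<longleftrightarrow> (\<forall>f\<in>B. \<Phi> f \<in> bounded_ops)
     \<and> \<Phi> 1 = Id
     \<and> (\<forall>f\<in>B. \<forall>g\<in>B. \<Phi> (f + g) = op_add (\<Phi> f) (\<Phi> g) \<and> \<Phi> (f * g) = op_mult (\<Phi> f) (\<Phi> g))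
     \<and> (\<forall>c. \<forall>f\<in>B. \<Phi> (c *\<^sub>C f) = op_scale c (\<Phi> f))"

end

theory Submission
  imports Defs
begin

text \<open>Each inclusion in (FC2) and (FC3) relates single-valued graphs, so it is an equality as
  soon as the smaller graph has the larger domain. A bounded operator is everywhere defined,
  which supplies the missing domain inclusion in (a) and (b); for the sum one subtracts,
  using that \<open>\<Phi>(-g) \<supseteq> -\<Phi>(g)\<close> is everywhere defined as well. If \<open>fg = 1\<close>, then by (FC3) the
  product \<open>\<Phi>(f)\<Phi>(g)\<close> is defined on all of \<open>dom \<Phi>(g)\<close> and contained in \<open>\<Phi>(1) = I\<close>, so
  \<open>\<Phi>(f)\<close> inverts \<open>\<Phi>(g)\<close>. Finally, bounded operators are closed under sums, products and
  scalar multiples, which together with (a) and (b) gives (d).\<close>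

lemma scaleC_zero_left [simp]: "(0::complex) *\<^sub>C (x::'a::complex_vector) = 0"
  using scaleC_add_left[of 0 0 x] by simp

lemma scaleC_zero_right [simp]: "(c::complex) *\<^sub>C (0::'a::complex_vector) = 0"
  using scaleC_add_right[of c 0 0] by simp

lemma scaleC_minus_one [simp]: "(-1::complex) *\<^sub>C (x::'a::complex_vector) = - x"
proof -
  have "x + (-1) *\<^sub>C x = 0"
    using scaleC_add_left[of 1 "-1" x] by (simp add: scaleC_one)
  then show ?thesis by (simp add: add_eq_0_iff)
qed

lemma scaleC_left_commute: "(a::complex) *\<^sub>C (b *\<^sub>C (x::'a::complex_vector)) = b *\<^sub>C (a *\<^sub>C x)"
  by (simp add: scaleC_scaleC mult.commute)

lemma scaleC_inverse_cancel [simp]: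
  "(c::complex) \<noteq> 0 \<Longrightarrow> inverse c *\<^sub>C (c *\<^sub>C (x::'a::complex_vector)) = x"
  by (simp add: scaleC_scaleC scaleC_one)

lemma op_addI [intro]: "(x, y) \<in> S \<Longrightarrow> (x, z) \<in> T \<Longrightarrow> (x, y + z) \<in> op_add S T"
  unfolding op_add_def by blast

lemma op_addE [elim!]:
  assumes "(x, w) \<in> op_add S T"
  obtains y z where "w = y + z" "(x, y) \<in> S" "(x, z) \<in> T"
  using assms unfolding op_add_def by blast

lemma op_multI [intro]: "(x, y) \<in> T \<Longrightarrow> (y, z) \<in> S \<Longrightarrow> (x, z) \<in> op_mult S T"
  unfolding op_mult_def by blast

lemma op_multE [elim!]:
  assumes "(x, z) \<in> op_mult S T"
  obtains y where "(x, y) \<in> T" "(y, z) \<in> S"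
  using assms unfolding op_mult_def by blast

lemma op_scaleI [intro]: "(x, y) \<in> T \<Longrightarrow> (x, c *\<^sub>C y) \<in> op_scale c T"
  unfolding op_scale_def by blast

lemma op_scaleE [elim!]:
  assumes "(x, w) \<in> op_scale c T"
  obtains y where "w = c *\<^sub>C y" "(x, y) \<in> T"
  using assms unfolding op_scale_def by blast

lemma Domain_op_add [simp]: "Domain (op_add S T) = Domain S \<inter> Domain T"
  by blast

lemma Domain_op_scale [simp]: "Domain (op_scale c T) = Domain T"
  by blast

lemma Domain_op_mult_eq_UNIV:
  "Domain S = UNIV \<Longrightarrow> Domain T = UNIV \<Longrightarrow> Domain (op_mult S T) = UNIV"
  by blast

lemma linear_opI:
  assumes "(0, 0) \<in> G"
    and "\<And>x y u v. (x, y) \<in> G \<Longrightarrow> (u, v) \<in> G \<Longrightarrow> (x + u, y + v) \<in> G"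
    and "\<And>c x y. (x, y) \<in> G \<Longrightarrow> (c *\<^sub>C x, c *\<^sub>C y) \<in> G"
    and "\<And>y. (0, y) \<in> G \<Longrightarrow> y = 0"
  shows "linear_op G"
  using assms unfolding linear_op_def by blast

lemma linear_opD:
  assumes "linear_op G"
  shows "(0, 0) \<in> G"
    and "(x, y) \<in> G \<Longrightarrow> (u, v) \<in> G \<Longrightarrow> (x + u, y + v) \<in> G"
    and "(x, y) \<in> G \<Longrightarrow> (c *\<^sub>C x, c *\<^sub>C y) \<in> G"
    and "(0, y) \<in> G \<Longrightarrow> y = 0"
  using assms unfolding linear_op_def by blast+

lemma linear_op_single_valued:
  assumes "linear_op G" "(x, y) \<in> G" "(x, y') \<in> G"
  shows "y = y'"
proof -
  have "((-1) *\<^sub>C x, (-1) *\<^sub>C y') \<in> G"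
    using assms(1,3) by (rule linear_opD)
  then have "(- x, - y') \<in> G" by simp
  then have "(x + - x, y + - y') \<in> G" by (rule linear_opD(2)[OF assms(1,2)])
  then have "(0, y - y') \<in> G" by simp
  then have "y - y' = 0" by (rule linear_opD(4)[OF assms(1)])
  then show ?thesis by simp
qed

lemma linear_op_eq_of_subset_Domain:
  assumes "linear_op T" "S \<subseteq> T" "Domain T \<subseteq> Domain S"
  shows "S = T"
proof
  show "T \<subseteq> S"
  proof
    fix p assume "p \<in> T"
    then obtain x y where p: "p = (x, y)" "(x, y) \<in> T" by (cases p) auto
    then obtain y' where "(x, y') \<in> S" using assms(3) by blast
    with p assms(1,2) show "p \<in> S" using linear_op_single_valued by blast
  qed
qed (fact assms(2))

lemma linear_op_op_add:
  assumes S: "linear_op S" and T: "linear_op T"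
  shows "linear_op (op_add S T)"
proof (rule linear_opI)
  show "(0, 0) \<in> op_add S T"
    using op_addI[OF linear_opD(1)[OF S] linear_opD(1)[OF T]] by simp
next
  fix x w u w' assume "(x, w) \<in> op_add S T" "(u, w') \<in> op_add S T"
  then obtain y z y' z' where "w = y + z" "(x, y) \<in> S" "(x, z) \<in> T"
    and "w' = y' + z'" "(u, y') \<in> S" "(u, z') \<in> T"
    by blast
  then have "(x + u, (y + y') + (z + z')) \<in> op_add S T"
    by (intro op_addI linear_opD(2)[OF S] linear_opD(2)[OF T])
  moreover have "w + w' = (y + y') + (z + z')"
    using \<open>w = y + z\<close> \<open>w' = y' + z'\<close> by (simp add: add_ac)
  ultimately show "(x + u, w + w') \<in> op_add S T" by simp
next
  fix c x w assume "(x, w) \<in> op_add S T"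
  then obtain y z where "w = y + z" "(x, y) \<in> S" "(x, z) \<in> T"
    by blast
  then have "(c *\<^sub>C x, c *\<^sub>C y + c *\<^sub>C z) \<in> op_add S T"
    by (intro op_addI linear_opD(3)[OF S] linear_opD(3)[OF T])
  then show "(c *\<^sub>C x, c *\<^sub>C w) \<in> op_add S T"
    using \<open>w = y + z\<close> by (simp add: scaleC_add_right)
next
  fix w assume "(0, w) \<in> op_add S T"
  then show "w = 0"
    using linear_opD(4)[OF S] linear_opD(4)[OF T] by fastforce
qed

lemma linear_op_op_mult:
  assumes S: "linear_op S" and T: "linear_op T"
  shows "linear_op (op_mult S T)"
proof (rule linear_opI)
  show "(0, 0) \<in> op_mult S T"
    using linear_opD(1)[OF S] linear_opD(1)[OF T] by blast
next
  fix x z u w assume "(x, z) \<in> op_mult S T" "(u, w) \<in> op_mult S T"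
  then show "(x + u, z + w) \<in> op_mult S T"
    using linear_opD(2)[OF S] linear_opD(2)[OF T] by blast
next
  fix c x z assume "(x, z) \<in> op_mult S T"
  then show "(c *\<^sub>C x, c *\<^sub>C z) \<in> op_mult S T"
    using linear_opD(3)[OF S] linear_opD(3)[OF T] by blast
next
  fix z assume "(0, z) \<in> op_mult S T"
  then show "z = 0"
    using linear_opD(4)[OF S] linear_opD(4)[OF T] by blast
qed

lemma linear_op_op_scale:
  assumes T: "linear_op T"
  shows "linear_op (op_scale c T)"
proof (rule linear_opI)
  show "(0, 0) \<in> op_scale c T"
    using op_scaleI[OF linear_opD(1)[OF T], of c] by simp
next
  fix x w u w' assume "(x, w) \<in> op_scale c T" "(u, w') \<in> op_scale c T"
  then obtain y y' where "w = c *\<^sub>C y" "(x, y) \<in> T" "w' = c *\<^sub>C y'" "(u, y') \<in> T"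
    by blast
  then have "(x + u, c *\<^sub>C (y + y')) \<in> op_scale c T"
    by (intro op_scaleI linear_opD(2)[OF T])
  then show "(x + u, w + w') \<in> op_scale c T"
    using \<open>w = c *\<^sub>C y\<close> \<open>w' = c *\<^sub>C y'\<close> by (simp add: scaleC_add_right)
next
  fix d x w assume "(x, w) \<in> op_scale c T"
  then obtain y where "w = c *\<^sub>C y" "(x, y) \<in> T"
    by blast
  then have "(d *\<^sub>C x, c *\<^sub>C (d *\<^sub>C y)) \<in> op_scale c T"
    by (intro op_scaleI linear_opD(3)[OF T])
  then show "(d *\<^sub>C x, d *\<^sub>C w) \<in> op_scale c T"
    using \<open>w = c *\<^sub>C y\<close> by (simp add: scaleC_left_commute[of c d])
next
  fix w assume "(0, w) \<in> op_scale c T"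
  then obtain y where "w = c *\<^sub>C y" "(0, y) \<in> T"
    by blast
  moreover from this(2) have "y = 0" by (rule linear_opD(4)[OF T])
  ultimately show "w = 0" by simp
qed

lemma Domain_bounded_ops: "G \<in> bounded_ops \<Longrightarrow> Domain G = UNIV"
  unfolding bounded_ops_def by blast

lemma bounded_opsI:
  assumes "linear_op G" "Domain G = UNIV" "\<And>x y. (x, y) \<in> G \<Longrightarrow> norm y \<le> C * norm x"
  shows "G \<in> bounded_ops"
  using assms unfolding bounded_ops_def by blast

lemma bounded_opsE:
  assumes "G \<in> bounded_ops"
  obtains C where "C \<ge> 0" "\<And>x y. (x, y) \<in> G \<Longrightarrow> norm y \<le> C * norm x"
proof -
  obtain C where C: "\<And>x y. (x, y) \<in> G \<Longrightarrow> norm y \<le> C * norm x"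
    using assms unfolding bounded_ops_def by blast
  have "norm y \<le> max C 0 * norm x" if "(x, y) \<in> G" for x y
    using C[OF that] mult_right_mono[of C "max C 0" "norm x"] by simp
  then show ?thesis using that[of "max C 0"] by simp
qed

lemma linear_op_bounded_ops: "G \<in> bounded_ops \<Longrightarrow> linear_op G"
  unfolding bounded_ops_def by blast

lemma Id_bounded_ops: "Id \<in> bounded_ops"
  unfolding bounded_ops_def linear_op_def by (auto intro!: exI[of _ 1])

lemma bounded_ops_op_add:
  assumes "S \<in> bounded_ops" "T \<in> bounded_ops"
  shows "op_add S T \<in> bounded_ops"
proof -
  obtain C1 C2 where C1: "\<And>x y. (x, y) \<in> S \<Longrightarrow> norm y \<le> C1 * norm x"
    and C2: "\<And>x y. (x, y) \<in> T \<Longrightarrow> norm y \<le> C2 * norm x"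
    using assms by (metis bounded_opsE)
  have "norm (y + z) \<le> (C1 + C2) * norm x" if "(x, y) \<in> S" "(x, z) \<in> T" for x y z
    using norm_triangle_ineq[of y z] C1[OF that(1)] C2[OF that(2)] by (simp add: distrib_right)
  with assms show ?thesis
    by (intro bounded_opsI[of _ "C1 + C2"])
      (auto simp: Domain_bounded_ops intro: linear_op_op_add linear_op_bounded_ops)
qed

lemma bounded_ops_op_mult:
  assumes "S \<in> bounded_ops" "T \<in> bounded_ops"
  shows "op_mult S T \<in> bounded_ops"
proof -
  obtain C1 C2 where "C1 \<ge> 0" and C1: "\<And>x y. (x, y) \<in> S \<Longrightarrow> norm y \<le> C1 * norm x"
    and C2: "\<And>x y. (x, y) \<in> T \<Longrightarrow> norm y \<le> C2 * norm x"
    using assms by (metis bounded_opsE)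
  have "norm z \<le> (C1 * C2) * norm x" if "(x, y) \<in> T" "(y, z) \<in> S" for x y z
    using C1[OF that(2)] mult_left_mono[OF C2[OF that(1)] \<open>C1 \<ge> 0\<close>] by (simp add: mult.assoc)
  with assms show ?thesis
    by (intro bounded_opsI[of _ "C1 * C2"])
      (auto simp: Domain_bounded_ops Domain_op_mult_eq_UNIV
        intro: linear_op_op_mult linear_op_bounded_ops)
qed

lemma bounded_ops_op_scale:
  assumes "T \<in> bounded_ops"
  shows "op_scale c T \<in> bounded_ops"
proof -
  obtain C where C: "\<And>x y. (x, y) \<in> T \<Longrightarrow> norm y \<le> C * norm x"
    using assms by (metis bounded_opsE)
  have "norm (c *\<^sub>C y) \<le> (cmod c * C) * norm x" if "(x, y) \<in> T" for x y
    using mult_left_mono[OF C[OF that], of "cmod c"] by (simp add: norm_scaleC mult.assoc)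
  with assms show ?thesis
    by (intro bounded_opsI[of _ "cmod c * C"])
      (auto simp: Domain_bounded_ops intro: linear_op_op_scale linear_op_bounded_ops)
qed

context
  fixes \<Phi> :: "'f::complex_algebra_1 \<Rightarrow> ('x::{complex_normed_vector,banach} \<times> 'x) set"
  assumes proto: "proto_calculus \<Phi>"
begin

lemma proto_calculus_linear_op: "linear_op (\<Phi> f)"
  using proto by (simp add: proto_calculus_def closed_ops_def)

lemma proto_calculus_one: "\<Phi> 1 = Id"
  using proto by (simp add: proto_calculus_def)

lemma proto_calculus_scale_subset: "op_scale c (\<Phi> f) \<subseteq> \<Phi> (c *\<^sub>C f)"
  using proto by (simp add: proto_calculus_def)

lemma proto_calculus_add_subset: "op_add (\<Phi> f) (\<Phi> g) \<subseteq> \<Phi> (f + g)"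
  using proto by (simp add: proto_calculus_def)

lemma proto_calculus_mult_subset: "op_mult (\<Phi> f) (\<Phi> g) \<subseteq> \<Phi> (f * g)"
  using proto by (simp add: proto_calculus_def)

lemma proto_calculus_Domain_mult:
  "Domain (op_mult (\<Phi> f) (\<Phi> g)) = Domain (\<Phi> g) \<inter> Domain (\<Phi> (f * g))"
  using proto by (simp add: proto_calculus_def)

lemma proto_calculus_scale:
  assumes "c \<noteq> 0 \<or> \<Phi> f \<in> bounded_ops"
  shows "\<Phi> (c *\<^sub>C f) = op_scale c (\<Phi> f)"
proof (rule linear_op_eq_of_subset_Domain[symmetric])
  show "Domain (\<Phi> (c *\<^sub>C f)) \<subseteq> Domain (op_scale c (\<Phi> f))"
  proof (cases "c = 0")
    case False
    have "Domain (op_scale (inverse c) (\<Phi> (c *\<^sub>C f))) \<subseteq> Domain (\<Phi> (inverse c *\<^sub>C (c *\<^sub>C f)))"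
      using proto_calculus_scale_subset by (rule Domain_mono)
    with False show ?thesis by simp
  next
    case True
    with assms show ?thesis by (simp add: Domain_bounded_ops)
  qed
qed (simp_all add: proto_calculus_linear_op proto_calculus_scale_subset)

lemma proto_calculus_add:
  assumes "\<Phi> g \<in> bounded_ops"
  shows "op_add (\<Phi> f) (\<Phi> g) = \<Phi> (f + g)"
proof (rule linear_op_eq_of_subset_Domain)
  have "op_scale (-1) (\<Phi> g) \<subseteq> \<Phi> (- g)"
    using proto_calculus_scale_subset[of "-1" g] by simp
  from Domain_mono[OF this] have "Domain (\<Phi> (- g)) = UNIV"
    using assms by (simp add: Domain_bounded_ops top.extremum_unique)
  then have "Domain (\<Phi> (f + g)) \<subseteq> Domain (op_add (\<Phi> (f + g)) (\<Phi> (- g)))"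
    by simp
  also have "\<dots> \<subseteq> Domain (\<Phi> f)"
    using Domain_mono[OF proto_calculus_add_subset[of "f + g" "- g"]] by simp
  finally show "Domain (\<Phi> (f + g)) \<subseteq> Domain (op_add (\<Phi> f) (\<Phi> g))"
    using assms by (simp add: Domain_bounded_ops)
qed (simp_all add: proto_calculus_linear_op proto_calculus_add_subset)

lemma proto_calculus_mult:
  assumes "\<Phi> g \<in> bounded_ops"
  shows "op_mult (\<Phi> f) (\<Phi> g) = \<Phi> (f * g)"
  using assms
  by (intro linear_op_eq_of_subset_Domain)
    (simp_all add: proto_calculus_linear_op proto_calculus_mult_subset
      proto_calculus_Domain_mult Domain_bounded_ops)

lemma proto_calculus_left_inverse:
  assumes "f * g = 1" "(x, y) \<in> \<Phi> g"
  shows "(y, x) \<in> \<Phi> f"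
proof -
  have "x \<in> Domain (op_mult (\<Phi> f) (\<Phi> g))"
    using assms by (auto simp: proto_calculus_Domain_mult proto_calculus_one)
  then obtain y' z where "(x, y') \<in> \<Phi> g" "(y', z) \<in> \<Phi> f" "(x, z) \<in> \<Phi> (f * g)"
    using proto_calculus_mult_subset by blast
  moreover from this(1) have "y' = y"
    using assms(2) proto_calculus_linear_op linear_op_single_valued by blast
  ultimately show ?thesis
    using assms(1) by (simp add: proto_calculus_one)
qed

lemma proto_calculus_injective_op: "f * g = 1 \<Longrightarrow> injective_op (\<Phi> g)"
  unfolding injective_op_def
  using proto_calculus_left_inverse proto_calculus_linear_op linear_op_single_valued by blast

lemma proto_calculus_op_inv_subset: "f * g = 1 \<Longrightarrow> op_inv (\<Phi> g) \<subseteq> \<Phi> f"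
  unfolding op_inv_def using proto_calculus_left_inverse by blast

lemma proto_calculus_op_inv: "f * g = 1 \<Longrightarrow> g * f = 1 \<Longrightarrow> op_inv (\<Phi> g) = \<Phi> f"
  by (auto simp: op_inv_def intro: proto_calculus_left_inverse)

lemma unital_subalgebra_bdd_set: "unital_subalgebra (bdd_set \<Phi>)"
  unfolding unital_subalgebra_def bdd_set_def
  by (simp add: proto_calculus_one Id_bounded_ops bounded_ops_op_add bounded_ops_op_mult
      bounded_ops_op_scale proto_calculus_scale
      flip: proto_calculus_add proto_calculus_mult)

lemma alg_hom_into_bounded_bdd_set: "alg_hom_into_bounded (bdd_set \<Phi>) \<Phi>"
  unfolding alg_hom_into_bounded_def bdd_set_def
  by (simp add: proto_calculus_one proto_calculus_scale proto_calculus_add proto_calculus_mult)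

end

theorem theorem2p1:
  fixes \<Phi> :: "'f::complex_algebra_1 \<Rightarrow> ('x::{complex_normed_vector,banach} \<times> 'x) set"
  assumes "proto_calculus \<Phi>"
  shows "(\<forall>f c. (c \<noteq> 0 \<or> \<Phi> f \<in> bounded_ops) \<longrightarrow> \<Phi> (c *\<^sub>C f) = op_scale c (\<Phi> f))
    \<and> (\<forall>f g. \<Phi> g \<in> bounded_ops \<longrightarrow>
          op_add (\<Phi> f) (\<Phi> g) = \<Phi> (f + g) \<and> op_mult (\<Phi> f) (\<Phi> g) = \<Phi> (f * g))
    \<and> (\<forall>f g. f * g = 1 \<longrightarrow>
          injective_op (\<Phi> g) \<and> op_inv (\<Phi> g) \<subseteq> \<Phi> f
          \<and> (f * g = g * f \<longrightarrow> op_inv (\<Phi> g) = \<Phi> f))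
    \<and> unital_subalgebra (bdd_set \<Phi>)
    \<and> alg_hom_into_bounded (bdd_set \<Phi>) \<Phi>"
  using assms
  by (simp add: proto_calculus_scale proto_calculus_add proto_calculus_mult
      proto_calculus_injective_op proto_calculus_op_inv_subset proto_calculus_op_inv
      unital_subalgebra_bdd_set alg_hom_into_bounded_bdd_set)

end
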